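(* Let $n\in\mathbb{N}$ and let $a=3$ or $a>5$ (real). Let $E_n(a,1)$ be the $(n+1)\times n$ matrix whose $(i,j)$ entry is $-a$ if $i=j$, $1$ if $j=i+1$, $a$ if $i=j+1$, $-1$ if $i=j+2$, and $0$ otherwise, and let $B_n(a,1)$ be the $(n+3)\times n$ matrix whose first row is $(1,0,\dots,0)$, whose rows $2,\dots,n+2$ are the rows of $E_n(a,1)$ in order, and whose last row is $(0,\dots,0,-1)$. Then the columns of $B_n(a,1)$ are linearly independent, and every non-zero linear combination of these columns has at least $4$ non-zero entries. *)

theory Defs
  imports Main "HOL.Real"
begin

text \<open>Matrices are functions on 0-based indices (row i, column j).
  E_n(a,1): the (n+1) x n matrix with entry -a if i=j, 1 if j=i+1, a if i=j+1,
  -1 if i=j+2, 0 otherwise (rows i < n+1, columns j < n).\<close>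
definition E_mat :: "real \<Rightarrow> nat \<Rightarrow> nat \<Rightarrow> real" where
  "E_mat a i j =
     (if i = j then - a
      else if j = i + 1 then 1
      else if i = j + 1 then a
      else if i = j + 2 then -1
      else 0)"

definition B_mat :: "nat \<Rightarrow> real \<Rightarrow> nat \<Rightarrow> nat \<Rightarrow> real" where
  "B_mat n a i j =
     (if i = 0 then (if j = 0 then 1 else 0)
      else if i \<le> n + 1 then E_mat a (i - 1) j
      else (if j = n - 1 then -1 else 0))"

definition lincomb_B :: "nat \<Rightarrow> real \<Rightarrow> (nat \<Rightarrow> real) \<Rightarrow> nat \<Rightarrow> real" where
  "lincomb_B n a c i = (\<Sum>j<n. B_mat n a i j * c j)"

end

theory Submission
  imports Defs Complex_Main
begin

text \<open>Column j of B_n(a,1) is the coefficient vector of t^j p(t) with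
  p(t) = 1 - a t + a t^2 - t^3 = (1 - t)(t^2 - (a - 1) t + 1), so B_n(a,1) c is the
  coefficient vector of C(t) p(t), where C(t) = sum c_j t^j. Hence every solution w of the
  linear recurrence with characteristic polynomial p is orthogonal to B_n(a,1) c. For
  a \<ge> 3 this recurrence has three solutions of the Vandermonde form s_k \<nu>_k^i (i = 0, 1, 2)
  with \<nu> injective and s non-vanishing: k^i if a = 3, where 1 is a triple root of p, and
  r^(-k), 1, r^k if a > 3, where r > 1 is a root of p. A vector with at most three non-zero
  entries that is orthogonal to all three vanishes by the Vandermonde determinant. Finally
  B_n(a,1) c = 0 forces c = 0, because the entry at the first non-zero coefficient of c
  equals that coefficient. So the hypothesis of the theorem is only used in the form a \<ge> 3.\<close>

definition B_poly :: "real \<Rightarrow> real \<Rightarrow> real" where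
  "B_poly a t = 1 - a * t + a * t ^ 2 - t ^ 3"

definition B_transpose_apply :: "real \<Rightarrow> (nat \<Rightarrow> real) \<Rightarrow> nat \<Rightarrow> real" where
  "B_transpose_apply a w j = w j - a * w (j + 1) + a * w (j + 2) - w (j + 3)"

lemma B_mat_column:
  assumes "j < n" "k < n + 3"
  shows "B_mat n a k j = (if k = j then 1 else if k = j + 1 then - a
     else if k = j + 2 then a else if k = j + 3 then - 1 else 0)"
proof -
  consider "k = 0" | i where "k = Suc i" "i \<le> n" | "k = n + 2"
    using assms(2) by (cases k) (auto simp: less_Suc_eq)
  then show ?thesis
  proof cases
    case 1
    then show ?thesis by (simp add: B_mat_def)
  next
    case (2 i)
    then show ?thesis by (simp add: B_mat_def E_mat_def)
  next
    case 3
    then show ?thesis using assms(1) by (simp add: B_mat_def)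
  qed
qed

lemma sum_B_mat_column:
  assumes "j < n"
  shows "(\<Sum>k<n + 3. B_mat n a k j * w k) = B_transpose_apply a w j"
proof -
  have "(\<Sum>k<n + 3. B_mat n a k j * w k) = (\<Sum>k\<in>{j, j + 1, j + 2, j + 3}. B_mat n a k j * w k)"
    by (rule sum.mono_neutral_right) (use assms in \<open>auto simp: B_mat_column\<close>)
  also have "\<dots> = B_transpose_apply a w j"
    using assms by (simp add: B_mat_column B_transpose_apply_def)
  finally show ?thesis .
qed

lemma lincomb_B_pairing:
  "(\<Sum>k<n + 3. lincomb_B n a c k * w k) = (\<Sum>j<n. c j * B_transpose_apply a w j)"
proof -
  have "(\<Sum>k<n + 3. lincomb_B n a c k * w k) = (\<Sum>k<n + 3. \<Sum>j<n. c j * (B_mat n a k j * w k))"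
    unfolding lincomb_B_def sum_distrib_right by (simp add: mult_ac)
  also have "\<dots> = (\<Sum>j<n. c j * (\<Sum>k<n + 3. B_mat n a k j * w k))"
    by (subst sum.swap) (simp add: sum_distrib_left)
  also have "\<dots> = (\<Sum>j<n. c j * B_transpose_apply a w j)"
    by (rule sum.cong) (simp_all add: sum_B_mat_column)
  finally show ?thesis .
qed

lemma lincomb_B_at_first_nonzero:
  assumes "j0 < n" "\<And>j. j < j0 \<Longrightarrow> c j = 0"
  shows "lincomb_B n a c j0 = c j0"
proof -
  have "lincomb_B n a c j0 = (\<Sum>j<n. if j = j0 then c j0 else 0)"
    unfolding lincomb_B_def
  proof (rule sum.cong)
    fix j assume "j \<in> {..<n}"
    then show "B_mat n a j0 j * c j = (if j = j0 then c j0 else 0)"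
      using assms B_mat_column[of j n j0 a] by (cases "j < j0") auto
  qed simp
  then show ?thesis using assms(1) by simp
qed

lemma lincomb_B_injective:
  assumes "\<exists>j<n. c j \<noteq> 0"
  shows "\<exists>i<n + 3. lincomb_B n a c i \<noteq> 0"
proof -
  define j0 where "j0 = (LEAST j. j < n \<and> c j \<noteq> 0)"
  have j0: "j0 < n" "c j0 \<noteq> 0"
    using LeastI_ex[OF assms] unfolding j0_def by auto
  have "c j = 0" if "j < j0" for j
    using not_less_Least[of j "\<lambda>j. j < n \<and> c j \<noteq> 0"] that j0 unfolding j0_def by auto
  then have "lincomb_B n a c j0 = c j0"
    using lincomb_B_at_first_nonzero j0(1) by blast
  then show ?thesis using j0 by (intro exI[of _ j0]) simp
qed

lemma B_transpose_apply_power: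
  "B_transpose_apply a (\<lambda>k. t ^ k) j = t ^ j * B_poly a t"
  by (simp add: B_transpose_apply_def B_poly_def power_add power2_eq_square power3_eq_cube
      algebra_simps)

lemma B_poly_one: "B_poly a 1 = 0"
  by (simp add: B_poly_def)

lemma B_poly_inverse:
  assumes "B_poly a t = 0"
  shows "B_poly a (1 / t) = 0"
proof -
  have "t \<noteq> 0" using assms by (auto simp: B_poly_def)
  then have "t ^ 3 * B_poly a (1 / t) = - B_poly a t"
    by (simp add: B_poly_def field_simps power2_eq_square power3_eq_cube)
  then show ?thesis using assms \<open>t \<noteq> 0\<close> by simp
qed

lemma B_poly_root_gt_1:
  assumes "a > 3"
  obtains r where "r > 1" "B_poly a r = 0"
proof -
  define d where "d = (a - 1) ^ 2 - 4"
  define r where "r = ((a - 1) + sqrt d) / 2"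
  have "2 * 2 < (a - 1) * (a - 1)"
    using assms by (intro mult_strict_mono) auto
  then have d: "d \<ge> 0" by (simp add: d_def power2_eq_square)
  moreover have "2 * r = a - 1 + sqrt d" by (simp add: r_def)
  ultimately have "r > 1" using assms real_sqrt_ge_zero[of d] by linarith
  have "r ^ 2 - (a - 1) * r + 1 = 0"
    using real_sqrt_pow2[OF d] by (simp add: r_def d_def power2_eq_square field_simps)
  moreover have "B_poly a r = (1 - r) * (r ^ 2 - (a - 1) * r + 1)"
    by (simp add: B_poly_def algebra_simps power2_eq_square power3_eq_cube)
  ultimately have "B_poly a r = 0" by simp
  with \<open>r > 1\<close> show ?thesis using that by blast
qed

lemma B_transpose_vandermonde_solutions:
  assumes "a \<ge> 3"
  obtains s \<nu> :: "nat \<Rightarrow> real"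
  where "inj \<nu>" "\<And>k. s k \<noteq> 0"
    "\<And>i j. i < 3 \<Longrightarrow> B_transpose_apply a (\<lambda>k. s k * \<nu> k ^ i) j = 0"
proof (cases "a = 3")
  case True
  have "B_transpose_apply a (\<lambda>k. 1 * real k ^ i) j = 0" if i: "i < 3" for i j
  proof -
    consider "i = 0" | "i = 1" | "i = 2" using i by linarith
    then show ?thesis
      by cases (use True in \<open>simp_all add: B_transpose_apply_def algebra_simps power2_eq_square\<close>)
  qed
  then show ?thesis using that[of real "\<lambda>_. 1"] inj_of_nat by simp
next
  case False
  with assms have "a > 3" by simp
  then obtain r where r: "r > 1" "B_poly a r = 0"
    by (rule B_poly_root_gt_1)
  have "B_transpose_apply a (\<lambda>k. (1 / r) ^ k * (r ^ k) ^ i) j = 0" if i: "i < 3" for i j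
  proof -
    have "(1 / r) ^ k * (r ^ k) ^ i = (r ^ i / r) ^ k" for k
      by (simp add: power_one_over power_divide mult.commute flip: power_mult)
    moreover have "B_poly a (r ^ i / r) = 0"
    proof -
      consider "i = 0" | "i = 1" | "i = 2" using i by linarith
      then show ?thesis
        by cases (use r B_poly_inverse[OF r(2)] B_poly_one in \<open>simp_all add: power2_eq_square\<close>)
    qed
    ultimately show ?thesis by (simp add: B_transpose_apply_power)
  qed
  moreover have "inj (\<lambda>k. r ^ k)"
    using r(1) by (auto intro: injI)
  ultimately show ?thesis using that[of "\<lambda>k. r ^ k" "\<lambda>k. (1 / r) ^ k"] r(1) by simp
qed

lemma vandermonde3_eq_0:
  fixes x y z \<alpha> \<beta> \<gamma> :: "'a :: idom"
  assumes "x \<noteq> y" "y \<noteq> z" "x \<noteq> z"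
    and "\<And>i. i < 3 \<Longrightarrow> \<alpha> * x ^ i + \<beta> * y ^ i + \<gamma> * z ^ i = 0"
  shows "\<alpha> = 0 \<and> \<beta> = 0 \<and> \<gamma> = 0"
proof -
  have e0: "\<alpha> + \<beta> + \<gamma> = 0" using assms(4)[of 0] by simp
  have e1: "\<alpha> * x + \<beta> * y + \<gamma> * z = 0" using assms(4)[of 1] by simp
  have e2: "\<alpha> * x ^ 2 + \<beta> * y ^ 2 + \<gamma> * z ^ 2 = 0" using assms(4)[of 2] by simp
  have "\<alpha> * (x - y) * (x - z) =
      (\<alpha> * x ^ 2 + \<beta> * y ^ 2 + \<gamma> * z ^ 2) - (y + z) * (\<alpha> * x + \<beta> * y + \<gamma> * z)
      + y * z * (\<alpha> + \<beta> + \<gamma>)"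
    by (simp add: algebra_simps power2_eq_square)
  then have "\<alpha> = 0" using assms(1,3) e0 e1 e2 by simp
  have "\<beta> * (y - x) * (y - z) =
      (\<alpha> * x ^ 2 + \<beta> * y ^ 2 + \<gamma> * z ^ 2) - (x + z) * (\<alpha> * x + \<beta> * y + \<gamma> * z)
      + x * z * (\<alpha> + \<beta> + \<gamma>)"
    by (simp add: algebra_simps power2_eq_square)
  then have "\<beta> = 0" using assms(1,2) e0 e1 e2 by simp
  with \<open>\<alpha> = 0\<close> show ?thesis using e0 by simp
qed

lemma obtain_three_distinct_superset:
  assumes "infinite (UNIV :: 'a set)" "finite S" "card S \<le> 3"
  obtains x y z :: 'a where "x \<noteq> y" "y \<noteq> z" "x \<noteq> z" "S \<subseteq> {x, y, z}"
proof -
  have "infinite (- S)" using assms(1,2) by (simp add: Compl_eq_Diff_UNIV)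
  then obtain R where R: "finite R" "card R = 3 - card S" "R \<subseteq> - S"
    using infinite_arbitrarily_large by blast
  then have "card (S \<union> R) = 3"
    using assms(2,3) by (subst card_Un_disjoint) auto
  then show ?thesis using that by (auto simp: card_3_iff)
qed

lemma lincomb_B_support_empty_if_card_le_3:
  assumes "a \<ge> 3" "card {i. i < n + 3 \<and> lincomb_B n a c i \<noteq> 0} \<le> 3"
  shows "{i. i < n + 3 \<and> lincomb_B n a c i \<noteq> 0} = {}"
proof -
  define S where "S = {i. i < n + 3 \<and> lincomb_B n a c i \<noteq> 0}"
  define V where "V k = (if k \<in> S then lincomb_B n a c k else 0)" for k
  obtain x y z where xyz: "x \<noteq> y" "y \<noteq> z" "x \<noteq> z" "S \<subseteq> {x, y, z}"
  proof (rule obtain_three_distinct_superset[of S])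
    show "finite S" by (simp add: S_def)
    show "card S \<le> 3" using assms(2) by (simp add: S_def)
  qed simp
  obtain \<nu> s where \<nu>: "inj \<nu>" and s: "\<And>k. s k \<noteq> 0"
    and solutions: "\<And>i j. i < 3 \<Longrightarrow> B_transpose_apply a (\<lambda>k. s k * \<nu> k ^ i) j = 0"
    using B_transpose_vandermonde_solutions[OF assms(1)] by metis
  have pairing: "V x * w x + V y * w y + V z * w z = (\<Sum>j<n. c j * B_transpose_apply a w j)"
    for w
  proof -
    have "V x * w x + V y * w y + V z * w z = (\<Sum>k\<in>{x, y, z}. V k * w k)"
      using xyz by simp
    also have "\<dots> = (\<Sum>k\<in>S. V k * w k)"
      by (rule sum.mono_neutral_right) (use xyz in \<open>auto simp: V_def\<close>)
    also have "\<dots> = (\<Sum>k<n + 3. lincomb_B n a c k * w k)"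
      by (rule sum.mono_neutral_cong_left) (auto simp: S_def V_def)
    finally show ?thesis by (simp add: lincomb_B_pairing)
  qed
  have "\<nu> x \<noteq> \<nu> y" "\<nu> y \<noteq> \<nu> z" "\<nu> x \<noteq> \<nu> z"
    using \<nu> xyz(1-3) by (simp_all add: inj_eq)
  moreover have "(V x * s x) * \<nu> x ^ i + (V y * s y) * \<nu> y ^ i + (V z * s z) * \<nu> z ^ i = 0"
    if "i < 3" for i
    using pairing[of "\<lambda>k. s k * \<nu> k ^ i"] solutions[OF that] by (simp add: mult_ac)
  ultimately have "V x * s x = 0 \<and> V y * s y = 0 \<and> V z * s z = 0"
    by (rule vandermonde3_eq_0)
  then have "V x = 0" "V y = 0" "V z = 0" using s by auto
  have "k \<notin> S" for k
  proof
    assume "k \<in> S"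
    then have "V k \<noteq> 0" by (simp add: V_def S_def)
    moreover have "V k = 0"
      using \<open>k \<in> S\<close> xyz(4) \<open>V x = 0\<close> \<open>V y = 0\<close> \<open>V z = 0\<close> by auto
    ultimately show False by simp
  qed
  then show ?thesis unfolding S_def by blast
qed

theorem corollary5p3:
  fixes n :: nat and a :: real
  assumes "a = 3 \<or> a > 5"
  shows "(\<forall>c :: nat \<Rightarrow> real. (\<forall>i<n + 3. lincomb_B n a c i = 0) \<longrightarrow> (\<forall>j<n. c j = 0))
       \<and> (\<forall>c :: nat \<Rightarrow> real. (\<exists>j<n. c j \<noteq> 0) \<longrightarrow>
             card {i. i < n + 3 \<and> lincomb_B n a c i \<noteq> 0} \<ge> 4)"
proof -
  have "a \<ge> 3" using assms by auto
  have independent: "\<forall>j<n. c j = 0" if "\<forall>i<n + 3. lincomb_B n a c i = 0" for c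
    using lincomb_B_injective that by blast
  have sparse: "card {i. i < n + 3 \<and> lincomb_B n a c i \<noteq> 0} \<ge> 4"
    if "\<exists>j<n. c j \<noteq> 0" for c
  proof -
    have "{i. i < n + 3 \<and> lincomb_B n a c i \<noteq> 0} \<noteq> {}"
      using lincomb_B_injective[OF that] by blast
    then show ?thesis
      using lincomb_B_support_empty_if_card_le_3[OF \<open>a \<ge> 3\<close>, of n c] by linarith
  qed
  show ?thesis using independent sparse by blast
qed

end
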